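(* Let $(Y,\lambda)\in\{-1,1\}\times\{-1,1\}^m$ follow the Ising model $$P(Y,\lambda)=\frac1Z\exp\Big(\theta_Y Y+\sum_{i}\theta_i\lambda_iY+\sum_{(i,j)\in E_\lambda}\theta_{ij}\lambda_i\lambda_j\Big),$$ with all canonical parameters nonnegative. Here $E_\lambda$ is a set of $|E_\lambda|=d$ unordered pairs of distinct sources, each source in at most one pair. Suppose the model is learned from $n_L$ i.i.d. labeled samples $(y^{(t)},\lambda^{(t)})_{t=1}^{n_L}$ of $(Y,\lambda)$, using the accuracy estimates $\tilde a_i^L=\frac1{n_L}\sum_{t=1}^{n_L}\lambda_i^{(t)}y^{(t)}$ together with the inference rule below. Then the excess generalization error satisfies $$R_L^e\le\frac{m}{2n_L}+\mathcal B_I+o(1/n_L),\qquad\text{where }\mathcal B_I=\sum_{(i,j)\in E_\lambda}I(\lambda_i;\lambda_j\mid Y).$$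
   Context: Inference rule. Set $$\tilde P(\lambda_i=\pm1\mid Y=1)=\frac{1\pm\tilde a_i}{2},\qquad \tilde P(\lambda_i=\pm1\mid Y=-1)=\frac{1\mp\tilde a_i}{2}.$$ Then define $$\tilde P(Y=y\mid\lambda=s)=\frac{\prod_i\tilde P(\lambda_i=s_i\mid Y=y)P(Y=y)}{\hat P(\lambda=s)},$$ where $P(Y=y)$ is the known true class balance and $\hat P$ is the empirical distribution of the source vectors in the dataset. Loss and errors. The loss is $$l(\tilde Y,Y)=-\frac{1+Y}{2}\log\tilde P(Y=1\mid\lambda)-\frac{1-Y}{2}\log\tilde P(Y=-1\mid\lambda).$$ The generalization error $R_L$ is $\mathbb E[l(\tilde Y,Y)]$, with expectation over a fresh $(Y,\lambda)\sim P$ and over the dataset. The excess generalization error is $R_L^e=R_L-H(Y\mid\lambda)$. $I(\cdot;\cdot\mid Y)$ denotes conditional mutual information under $P$. *)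

theory Defs
  imports "HOL-Library.FuncSet" "HOL-Library.Landau_Symbols"
begin

definition pm1 :: "real set" where "pm1 = {-1, 1}"

definition cube :: "nat \<Rightarrow> (nat \<Rightarrow> real) set" where
  "cube m = PiE {..<m} (\<lambda>_. pm1)"

text \<open>Exponent of the Ising model; E is a set of unordered pairs {i,j}.\<close>
definition ising_energy ::
  "nat \<Rightarrow> real \<Rightarrow> (nat \<Rightarrow> real) \<Rightarrow> nat set set \<Rightarrow> (nat set \<Rightarrow> real) \<Rightarrow> real \<Rightarrow> (nat \<Rightarrow> real) \<Rightarrow> real" where
  "ising_energy m thY th E thE y s =
     thY * y + (\<Sum>i<m. th i * s i * y) + (\<Sum>e\<in>E. thE e * (\<Prod>i\<in>e. s i))"

definition ising_Z ::
  "nat \<Rightarrow> real \<Rightarrow> (nat \<Rightarrow> real) \<Rightarrow> nat set set \<Rightarrow> (nat set \<Rightarrow> real) \<Rightarrow> real" where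
  "ising_Z m thY th E thE = (\<Sum>y\<in>pm1. \<Sum>s\<in>cube m. exp (ising_energy m thY th E thE y s))"

definition ising ::
  "nat \<Rightarrow> real \<Rightarrow> (nat \<Rightarrow> real) \<Rightarrow> nat set set \<Rightarrow> (nat set \<Rightarrow> real) \<Rightarrow> real \<Rightarrow> (nat \<Rightarrow> real) \<Rightarrow> real" where
  "ising m thY th E thE y s = exp (ising_energy m thY th E thE y s) / ising_Z m thY th E thE"

text \<open>In what follows P is a joint pmf on pm1 \<times> cube m.\<close>

definition prY :: "(real \<Rightarrow> (nat \<Rightarrow> real) \<Rightarrow> real) \<Rightarrow> nat \<Rightarrow> real \<Rightarrow> real" where
  "prY P m y = (\<Sum>s\<in>cube m. P y s)"

definition prLam :: "(real \<Rightarrow> (nat \<Rightarrow> real) \<Rightarrow> real) \<Rightarrow> (nat \<Rightarrow> real) \<Rightarrow> real" where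
  "prLam P s = (\<Sum>y\<in>pm1. P y s)"

definition datasets :: "nat \<Rightarrow> nat \<Rightarrow> (nat \<Rightarrow> real \<times> (nat \<Rightarrow> real)) set" where
  "datasets m n = PiE {..<n} (\<lambda>_. pm1 \<times> cube m)"

definition pr_data :: "(real \<Rightarrow> (nat \<Rightarrow> real) \<Rightarrow> real) \<Rightarrow> nat \<Rightarrow> (nat \<Rightarrow> real \<times> (nat \<Rightarrow> real)) \<Rightarrow> real" where
  "pr_data P n D = (\<Prod>t<n. P (fst (D t)) (snd (D t)))"

definition acc_est :: "nat \<Rightarrow> (nat \<Rightarrow> real \<times> (nat \<Rightarrow> real)) \<Rightarrow> nat \<Rightarrow> real" where
  "acc_est n D i = (\<Sum>t<n. snd (D t) i * fst (D t)) / real n"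

text \<open>P~(lambda_i = v | Y = y) = (1 + v y a_i)/2, i.e. (1 \<plusminus> a_i)/2 resp. (1 \<mp> a_i)/2.\<close>
definition src_cond :: "real \<Rightarrow> real \<Rightarrow> real \<Rightarrow> real" where
  "src_cond a v y = (1 + v * y * a) / 2"

definition emp_lam :: "nat \<Rightarrow> (nat \<Rightarrow> real \<times> (nat \<Rightarrow> real)) \<Rightarrow> (nat \<Rightarrow> real) \<Rightarrow> real" where
  "emp_lam n D s = real (card {t\<in>{..<n}. snd (D t) = s}) / real n"

definition post_est ::
  "(real \<Rightarrow> (nat \<Rightarrow> real) \<Rightarrow> real) \<Rightarrow> nat \<Rightarrow> nat \<Rightarrow> (nat \<Rightarrow> real \<times> (nat \<Rightarrow> real)) \<Rightarrow> real \<Rightarrow> (nat \<Rightarrow> real) \<Rightarrow> real" where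
  "post_est P m n D y s =
     (\<Prod>i<m. src_cond (acc_est n D i) (s i) y) * prY P m y / emp_lam n D s"

definition loss ::
  "(real \<Rightarrow> (nat \<Rightarrow> real) \<Rightarrow> real) \<Rightarrow> nat \<Rightarrow> nat \<Rightarrow> (nat \<Rightarrow> real \<times> (nat \<Rightarrow> real)) \<Rightarrow> real \<Rightarrow> (nat \<Rightarrow> real) \<Rightarrow> real" where
  "loss P m n D y s =
     - ((1 + y) / 2) * ln (post_est P m n D 1 s) - ((1 - y) / 2) * ln (post_est P m n D (-1) s)"

definition gen_err :: "(real \<Rightarrow> (nat \<Rightarrow> real) \<Rightarrow> real) \<Rightarrow> nat \<Rightarrow> nat \<Rightarrow> real" where
  "gen_err P m n =
     (\<Sum>D\<in>datasets m n. pr_data P n D *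
        (\<Sum>y\<in>pm1. \<Sum>s\<in>cube m. P y s * loss P m n D y s))"

definition cond_ent :: "(real \<Rightarrow> (nat \<Rightarrow> real) \<Rightarrow> real) \<Rightarrow> nat \<Rightarrow> real" where
  "cond_ent P m = - (\<Sum>y\<in>pm1. \<Sum>s\<in>cube m. P y s * ln (P y s / prLam P s))"

definition excess_err :: "(real \<Rightarrow> (nat \<Rightarrow> real) \<Rightarrow> real) \<Rightarrow> nat \<Rightarrow> nat \<Rightarrow> real" where
  "excess_err P m n = gen_err P m n - cond_ent P m"

definition pr1 :: "(real \<Rightarrow> (nat \<Rightarrow> real) \<Rightarrow> real) \<Rightarrow> nat \<Rightarrow> nat \<Rightarrow> real \<Rightarrow> real \<Rightarrow> real" where
  "pr1 P m i y a = (\<Sum>s\<in>{s\<in>cube m. s i = a}. P y s)"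

definition pr2 :: "(real \<Rightarrow> (nat \<Rightarrow> real) \<Rightarrow> real) \<Rightarrow> nat \<Rightarrow> nat \<Rightarrow> nat \<Rightarrow> real \<Rightarrow> real \<Rightarrow> real \<Rightarrow> real" where
  "pr2 P m i j y a b = (\<Sum>s\<in>{s\<in>cube m. s i = a \<and> s j = b}. P y s)"

definition cmi :: "(real \<Rightarrow> (nat \<Rightarrow> real) \<Rightarrow> real) \<Rightarrow> nat \<Rightarrow> nat \<Rightarrow> nat \<Rightarrow> real" where
  "cmi P m i j = (\<Sum>y\<in>pm1. \<Sum>a\<in>pm1. \<Sum>b\<in>pm1.
      pr2 P m i j y a b *
      ln ((pr2 P m i j y a b / prY P m y) / ((pr1 P m i y a / prY P m y) * (pr1 P m j y b / prY P m y))))"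

end

theory Submission
  imports Defs "HOL-Probability.Probability" "HOL-Real_Asymp.Real_Asymp"
begin

text \<open>
  Given the label, the Ising distribution factorises over the pairs of \<open>E\<close> and the unpaired
  sources, and flipping all spins only rescales the weight of the label. Hence source \<open>i\<close>
  agrees with the label with a probability \<open>p\<^sub>i\<close> that does not depend on the label, and the
  estimate \<open>P~(\<lambda>\<^sub>i | Y)\<close> is the empirical frequency of this agreement (or its complement).
  The log-loss of the estimated posterior is thus bounded by the log-losses of these
  frequencies, minus the log-prior of \<open>Y\<close>, plus the logarithm of the empirical frequency of
  the observed source vector. In expectation over the data, a frequency with mean \<open>p\<close> costs
  \<open>H(p) + 1/(2n) + o(1/n)\<close>: near \<open>p\<close> the cross-entropy is at most \<open>H(p)\<close> plus a quadratic
  whose mean is the variance \<open>p (1 - p) / n\<close> divided by about \<open>2 p (1 - p)\<close>, and Hoeffding's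
  inequality controls the rest. The logarithm of the empirical frequency of \<open>\<lambda>\<close> exceeds
  \<open>ln P(\<lambda>)\<close> in mean by an exponentially small term only (tangent-line bound for \<open>ln\<close>).
  What is left is \<open>\<Sum>\<^sub>i H(p\<^sub>i) - H(\<lambda> | Y)\<close>, the excess of the naive-Bayes entropy of the
  sources over the true one, which the factorisation identifies with the sum of
  \<open>I(\<lambda>\<^sub>i; \<lambda>\<^sub>j | Y)\<close> over the pairs of \<open>E\<close>.
\<close>

section \<open>Binomial expectations\<close>

definition binomial_expectation :: "nat \<Rightarrow> real \<Rightarrow> (nat \<Rightarrow> real) \<Rightarrow> real" where
  "binomial_expectation n q F = (\<Sum>k\<le>n. real (n choose k) * q ^ k * (1 - q) ^ (n - k) * F k)"

lemma binomial_expectation_0: "binomial_expectation 0 q F = F 0"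
  by (simp add: binomial_expectation_def)

lemma binomial_expectation_Suc:
  "binomial_expectation (Suc n) q F =
     q * binomial_expectation n q (\<lambda>k. F (Suc k)) + (1 - q) * binomial_expectation n q F"
proof -
  define w where "w n k = real (n choose k) * q ^ k * (1 - q) ^ (n - k)" for n k
  have pascal: "w (Suc n) (Suc k) = q * w n k + (1 - q) * w n (Suc k)" for k
  proof (cases "k < n")
    case True
    then have "Suc n - Suc k = Suc (n - Suc k)" "n - k = Suc (n - Suc k)" by auto
    then show ?thesis
      unfolding w_def binomial_Suc_Suc of_nat_add by (simp add: algebra_simps)
  qed (auto simp: w_def binomial_eq_0 le_Suc_eq)
  have "binomial_expectation (Suc n) q F = w (Suc n) 0 * F 0 + (\<Sum>k\<le>n. w (Suc n) (Suc k) * F (Suc k))"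
    unfolding binomial_expectation_def w_def by (subst sum.atMost_Suc_shift) simp
  also have "(\<Sum>k\<le>n. w (Suc n) (Suc k) * F (Suc k)) =
               q * (\<Sum>k\<le>n. w n k * F (Suc k)) + (1 - q) * (\<Sum>k\<le>n. w n (Suc k) * F (Suc k))"
    unfolding pascal by (simp add: distrib_right sum.distrib sum_distrib_left mult.assoc)
  also have "w (Suc n) 0 = (1 - q) * w n 0"
    by (simp add: w_def)
  also have "(\<Sum>k\<le>n. w n (Suc k) * F (Suc k)) = (\<Sum>k\<le>Suc n. w n k * F k) - w n 0 * F 0"
    by (subst sum.atMost_Suc_shift) simp
  also have "(\<Sum>k\<le>Suc n. w n k * F k) = binomial_expectation n q F"
    by (simp add: binomial_expectation_def w_def)
  finally show ?thesis by (simp add: binomial_expectation_def w_def algebra_simps)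
qed

lemma binomial_expectation_add:
  "binomial_expectation n q (\<lambda>k. F k + G k) = binomial_expectation n q F + binomial_expectation n q G"
  by (simp add: binomial_expectation_def algebra_simps sum.distrib)

lemma binomial_expectation_cmult:
  "binomial_expectation n q (\<lambda>k. c * F k) = c * binomial_expectation n q F"
  by (simp add: binomial_expectation_def algebra_simps sum_distrib_left)

lemma binomial_expectation_const: "binomial_expectation n q (\<lambda>_. c) = c"
  by (induction n) (simp_all add: binomial_expectation_0 binomial_expectation_Suc algebra_simps)

lemma binomial_expectation_mono:
  assumes "0 \<le> q" "q \<le> 1" "\<And>k. k \<le> n \<Longrightarrow> F k \<le> G k"
  shows "binomial_expectation n q F \<le> binomial_expectation n q G"
  unfolding binomial_expectation_def using assms by (intro sum_mono mult_left_mono) auto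

lemma binomial_expectation_id: "binomial_expectation n q real = real n * q"
  by (induction n)
     (simp_all add: binomial_expectation_0 binomial_expectation_Suc binomial_expectation_add
        binomial_expectation_const algebra_simps)

lemma binomial_expectation_square:
  "binomial_expectation n q (\<lambda>k. (real k)\<^sup>2) = real n * q * (1 - q) + (real n * q)\<^sup>2"
proof (induction n)
  case (Suc n)
  have "binomial_expectation n q (\<lambda>k. (real (Suc k))\<^sup>2)
          = binomial_expectation n q (\<lambda>k. (real k)\<^sup>2 + 2 * real k + 1)"
    by (simp add: power2_eq_square algebra_simps)
  also have "\<dots> = binomial_expectation n q (\<lambda>k. (real k)\<^sup>2) + 2 * (real n * q) + 1"
    by (simp add: binomial_expectation_add binomial_expectation_cmult binomial_expectation_const
          binomial_expectation_id)
  finally show ?case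
    using Suc by (simp add: binomial_expectation_Suc power2_eq_square algebra_simps)
qed (simp add: binomial_expectation_0)

lemma binomial_expectation_freq:
  assumes "n > 0"
  shows "binomial_expectation n q (\<lambda>k. real k / real n) = q"
  using assms binomial_expectation_cmult[of n q "1 / real n" real]
  by (simp add: binomial_expectation_id)

lemma binomial_expectation_freq_variance:
  assumes "n > 0"
  shows "binomial_expectation n q (\<lambda>k. (real k / real n - q)\<^sup>2) = q * (1 - q) / real n"
proof -
  have "binomial_expectation n q (\<lambda>k. (real k / real n - q)\<^sup>2) =
          binomial_expectation n q
            (\<lambda>k. (1 / (real n)\<^sup>2) * (real k)\<^sup>2 + (- 2 * q / real n) * real k + q\<^sup>2)"
    using assms by (intro arg_cong[where f = "binomial_expectation n q"])
                   (auto simp: fun_eq_iff power2_eq_square field_simps)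
  also have "\<dots> = (1 / (real n)\<^sup>2) * binomial_expectation n q (\<lambda>k. (real k)\<^sup>2)
                  + (- 2 * q / real n) * binomial_expectation n q real + q\<^sup>2"
    by (simp only: binomial_expectation_add binomial_expectation_cmult binomial_expectation_const)
  also have "\<dots> = q * (1 - q) / real n"
    using assms
    by (simp only: binomial_expectation_square binomial_expectation_id)
       (simp add: power2_eq_square field_simps)
  finally show ?thesis .
qed

lemma binomial_expectation_at_0:
  "binomial_expectation n q (\<lambda>k. if k = 0 then c else 0) = (1 - q) ^ n * c"
  by (simp add: binomial_expectation_def if_distrib sum.delta cong: if_cong)

lemma binomial_expectation_eq_expectation:
  assumes "0 \<le> q" "q \<le> 1"
  shows "binomial_expectation n q F = measure_pmf.expectation (binomial_pmf n q) F"
  using assms by (simp add: expectation_binomial_pmf' binomial_expectation_def)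

lemma binomial_expectation_deviation:
  assumes "0 \<le> q" "q \<le> 1" "n > 0" "\<delta> \<ge> 0"
  shows "binomial_expectation n q (\<lambda>k. if \<bar>real k / real n - q\<bar> \<ge> \<delta> then 1 else 0)
           \<le> 2 * exp (- 2 * real n * \<delta>\<^sup>2)"
proof -
  interpret binomial_distribution n q
    using assms by unfold_locales auto
  let ?A = "{k. \<bar>real k / real n - q\<bar> \<ge> \<delta>}"
  have "(\<lambda>k. if \<bar>real k / real n - q\<bar> \<ge> \<delta> then 1 else 0) = (indicator ?A :: nat \<Rightarrow> real)"
    by (auto simp: indicator_def)
  then have "binomial_expectation n q (\<lambda>k. if \<bar>real k / real n - q\<bar> \<ge> \<delta> then 1 else 0)
          = measure_pmf.expectation (binomial_pmf n q) (indicator ?A)"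
    using assms by (simp only: binomial_expectation_eq_expectation)
  also have "\<dots> = measure_pmf.prob (binomial_pmf n q) ?A"
    by simp
  also have "\<dots> \<le> 2 * exp (- 2 * real n * \<delta>\<^sup>2)"
    using prob_abs_ge'[of \<delta>] assms by simp
  finally show ?thesis .
qed

section \<open>Log-loss of empirical frequencies\<close>

definition binary_entropy :: "real \<Rightarrow> real" where
  "binary_entropy p = - p * ln p - (1 - p) * ln (1 - p)"

lemma binary_entropy_nonneg:
  assumes "0 < p" "p < 1"
  shows "binary_entropy p \<ge> 0"
proof -
  have "p * ln p \<le> 0" "(1 - p) * ln (1 - p) \<le> 0"
    using assms by (auto intro: mult_nonneg_nonpos)
  then show ?thesis by (simp add: binary_entropy_def)
qed

lemma DERIV_sign_imp_min:
  fixes \<phi> \<phi>' :: "real \<Rightarrow> real"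
  assumes deriv: "\<And>t. min p x \<le> t \<Longrightarrow> t \<le> max p x \<Longrightarrow> (\<phi> has_real_derivative \<phi>' t) (at t)"
    and right: "\<And>t. p \<le> t \<Longrightarrow> t \<le> x \<Longrightarrow> \<phi>' t \<ge> 0"
    and left: "\<And>t. x \<le> t \<Longrightarrow> t \<le> p \<Longrightarrow> \<phi>' t \<le> 0"
  shows "\<phi> p \<le> \<phi> x"
proof (cases "p \<le> x")
  case True
  show ?thesis
    by (rule deriv_nonneg_imp_mono[of p x \<phi> \<phi>']) (use True deriv right in auto)
next
  case False
  have "- \<phi> x \<le> - \<phi> p"
    by (rule deriv_nonneg_imp_mono[of x p "\<lambda>t. - \<phi> t" "\<lambda>t. - \<phi>' t"])
       (use False deriv left in \<open>auto intro: DERIV_minus\<close>)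
  then show ?thesis by simp
qed

text \<open>The derivative of \<open>t \<mapsto> (t - p)\<^sup>2 / (2 c) + p ln t + (1 - p) ln (1 - t)\<close> is
  \<open>(t - p) (1 / c - 1 / (t (1 - t)))\<close>, and \<open>t (1 - t) \<ge> c\<close> between \<open>p\<close> and \<open>x\<close>.\<close>
lemma binary_cross_entropy_le:
  assumes p: "0 < p" "p < 1" and x: "0 < x" "x < 1" "\<bar>x - p\<bar> \<le> \<delta>"
    and c: "c = p * (1 - p) - \<delta>" "c > 0"
  shows "- p * ln x - (1 - p) * ln (1 - x) \<le> binary_entropy p + (x - p)\<^sup>2 / (2 * c)"
proof -
  define \<phi> where "\<phi> t = (t - p)\<^sup>2 / (2 * c) + p * ln t + (1 - p) * ln (1 - t)" for t
  define \<phi>' where "\<phi>' t = (t - p) * (1 / c - 1 / (t * (1 - t)))" for t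
  have t: "0 < t" "t < 1" "\<bar>t - p\<bar> \<le> \<delta>" if "min p x \<le> t" "t \<le> max p x" for t
    using that p x by auto
  have deriv: "(\<phi> has_real_derivative \<phi>' t) (at t)" if "0 < t" "t < 1" for t
  proof -
    have "(\<phi> has_real_derivative (t - p) / c + p / t - (1 - p) / (1 - t)) (at t)"
      unfolding \<phi>_def
      by (insert that c(2), (rule derivative_eq_intros refl | simp)+) (simp add: field_simps)
    moreover have "(t - p) / c + p / t - (1 - p) / (1 - t) = \<phi>' t"
      unfolding \<phi>'_def using that c by (simp add: field_simps)
    ultimately show ?thesis by simp
  qed
  have factor: "1 / c - 1 / (t * (1 - t)) \<ge> 0" if "0 < t" "t < 1" "\<bar>t - p\<bar> \<le> \<delta>" for t
  proof -
    have "t * (1 - t) - p * (1 - p) = (t - p) * (1 - t - p)"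
      by (simp add: algebra_simps)
    moreover have "\<bar>(t - p) * (1 - t - p)\<bar> \<le> \<bar>t - p\<bar>"
      using that p by (auto simp: abs_mult intro!: mult_left_le)
    ultimately have "t * (1 - t) \<ge> c"
      using that c by linarith
    then show ?thesis
      using c by (simp add: frac_le)
  qed
  have "\<phi> p \<le> \<phi> x"
    by (rule DERIV_sign_imp_min[of p x \<phi> \<phi>'])
       (use t deriv factor in \<open>auto simp: \<phi>'_def mult_nonpos_nonneg\<close>)
  then show ?thesis by (simp add: \<phi>_def binary_entropy_def)
qed

text \<open>At \<open>x = 0\<close> the junk value \<open>- ln 0 = 0\<close> is replaced by \<open>ln n\<close>, the log-loss of the
  smallest positive frequency \<open>1 / n\<close>.\<close>
definition neg_ln_clipped :: "nat \<Rightarrow> real \<Rightarrow> real" where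
  "neg_ln_clipped n x = (if x = 0 then ln (real n) else - ln x)"

lemma neg_ln_clipped_nonneg: "0 \<le> x \<Longrightarrow> x \<le> 1 \<Longrightarrow> n > 0 \<Longrightarrow> neg_ln_clipped n x \<ge> 0"
  by (auto simp: neg_ln_clipped_def)

lemma neg_ln_clipped_le_ln:
  assumes "n > 0" "x = 0 \<or> real n * x \<ge> 1"
  shows "neg_ln_clipped n x \<le> ln (real n)"
proof (cases "x = 0")
  case False
  with assms have nx: "real n * x \<ge> 1" by auto
  then have "x > 0"
    by (smt (verit) mult_nonneg_nonpos of_nat_0_le_iff)
  have "0 \<le> ln (real n * x)" using nx by simp
  also have "\<dots> = ln (real n) + ln x" using \<open>x > 0\<close> assms(1) by (simp add: ln_mult)
  finally show ?thesis using False by (simp add: neg_ln_clipped_def)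
qed (simp add: neg_ln_clipped_def)

definition freq_cross_entropy :: "nat \<Rightarrow> real \<Rightarrow> nat \<Rightarrow> real" where
  "freq_cross_entropy n p k =
     p * neg_ln_clipped n (real k / real n) + (1 - p) * neg_ln_clipped n (1 - real k / real n)"

lemma freq_cross_entropy_le:
  assumes p: "0 < p" "p < 1" and c: "c = p * (1 - p) - \<delta>" "c > 0" "\<delta> > 0"
    and n: "n > 0" and k: "k \<le> n"
  shows "freq_cross_entropy n p k \<le> binary_entropy p + (real k / real n - p)\<^sup>2 / (2 * c)
           + (if \<bar>real k / real n - p\<bar> \<ge> \<delta> then ln (real n) else 0)"
proof (cases "\<bar>real k / real n - p\<bar> \<ge> \<delta>")
  case True
  have "real n * (1 - real k / real n) \<ge> 1" if "k \<noteq> n"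
  proof -
    have "real k + 1 \<le> real n" using that k by linarith
    then have "real n * (real k + 1) \<le> real n * real n" by (intro mult_left_mono) auto
    then show ?thesis using n by (simp add: field_simps)
  qed
  then have "1 - real k / real n = 0 \<or> real n * (1 - real k / real n) \<ge> 1"
    using n by (cases "k = n") auto
  then have "neg_ln_clipped n (real k / real n) \<le> ln (real n)"
            "neg_ln_clipped n (1 - real k / real n) \<le> ln (real n)"
    using n by (auto intro!: neg_ln_clipped_le_ln)
  then have "freq_cross_entropy n p k \<le> p * ln (real n) + (1 - p) * ln (real n)"
    unfolding freq_cross_entropy_def using p by (intro add_mono mult_left_mono) auto
  moreover have "(real k / real n - p)\<^sup>2 / (2 * c) \<ge> 0"
    using c by simp
  ultimately show ?thesis
    using True binary_entropy_nonneg[OF p] by (simp add: algebra_simps)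
next
  case False
  have "p * (1 - p) < 1 - p" "p * (1 - p) < p"
    using p mult_strict_right_mono[of p 1 "1 - p"] mult_strict_left_mono[of "1 - p" 1 p] by auto
  then have x: "0 < real k / real n" "real k / real n < 1"
    using False c by auto
  then have "real k / real n \<noteq> 0" "1 - real k / real n \<noteq> 0"
    by linarith+
  then have "freq_cross_entropy n p k = - p * ln (real k / real n) - (1 - p) * ln (1 - real k / real n)"
    unfolding freq_cross_entropy_def neg_ln_clipped_def by simp
  then show ?thesis
    using binary_cross_entropy_le[OF p x _ c(1,2)] False by simp
qed

text \<open>The quadratic term contributes the variance \<open>p (1 - p) / n\<close> of the frequency, the
  rest is controlled by Hoeffding's inequality.\<close>
lemma binomial_expectation_freq_cross_entropy_le:
  assumes p: "0 < p" "p < 1" and \<eta>: "0 < \<eta>" "\<eta> < 1" and n: "n > 0"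
  defines "\<delta> \<equiv> \<eta> * (p * (1 - p))"
  shows "binomial_expectation n p (freq_cross_entropy n p)
           \<le> binary_entropy p + 1 / (2 * (1 - \<eta>) * real n)
             + ln (real n) * (2 * exp (- 2 * real n * \<delta>\<^sup>2))"
proof -
  define c where "c = p * (1 - p) - \<delta>"
  have pq: "p * (1 - p) > 0" using p by simp
  have c_eq: "c = (1 - \<eta>) * (p * (1 - p))" by (simp add: c_def \<delta>_def algebra_simps)
  have c_pos: "c > 0" and \<delta>_pos: "\<delta> > 0" using pq \<eta> by (simp_all add: c_eq \<delta>_def)
  have "binomial_expectation n p (freq_cross_entropy n p)
          \<le> binomial_expectation n p (\<lambda>k. binary_entropy p + (1 / (2 * c)) * (real k / real n - p)\<^sup>2
               + ln (real n) * (if \<bar>real k / real n - p\<bar> \<ge> \<delta> then 1 else 0))"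
  proof (rule binomial_expectation_mono)
    fix k assume "k \<le> n"
    from freq_cross_entropy_le[OF p c_def c_pos \<delta>_pos n this]
    show "freq_cross_entropy n p k \<le> binary_entropy p + (1 / (2 * c)) * (real k / real n - p)\<^sup>2
            + ln (real n) * (if \<bar>real k / real n - p\<bar> \<ge> \<delta> then 1 else 0)"
      by (cases "\<bar>real k / real n - p\<bar> \<ge> \<delta>") simp_all
  qed (use p in auto)
  also have "\<dots> = binary_entropy p
                  + (1 / (2 * c)) * binomial_expectation n p (\<lambda>k. (real k / real n - p)\<^sup>2)
                  + ln (real n) * binomial_expectation n p
                      (\<lambda>k. if \<bar>real k / real n - p\<bar> \<ge> \<delta> then 1 else 0)"
    by (simp only: binomial_expectation_add binomial_expectation_cmult binomial_expectation_const)
  also have "\<dots> \<le> binary_entropy p + (1 / (2 * c)) * (p * (1 - p) / real n)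
                  + ln (real n) * (2 * exp (- 2 * real n * \<delta>\<^sup>2))"
    using binomial_expectation_freq_variance[OF n, of p]
      binomial_expectation_deviation[of p n \<delta>] p n \<delta>_pos c_pos
    by (intro add_mono mult_left_mono) auto
  also have "(1 / (2 * c)) * (p * (1 - p) / real n) = 1 / (2 * (1 - \<eta>) * real n)"
    using p \<eta> n by (simp add: c_eq)
  finally show ?thesis .
qed

lemma binomial_expectation_freq_cross_entropy_eventually_le:
  assumes p: "0 < p" "p < 1" and \<epsilon>: "\<epsilon> > 0"
  shows "eventually (\<lambda>n. binomial_expectation n p (freq_cross_entropy n p)
                          \<le> binary_entropy p + 1 / (2 * real n) + \<epsilon> / real n) sequentially"
proof -
  define \<eta> where "\<eta> = min (1/2) (\<epsilon>/2)"
  have \<eta>: "0 < \<eta>" "\<eta> \<le> 1/2" "\<eta> \<le> \<epsilon>/2" using \<epsilon> by (auto simp: \<eta>_def)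
  define \<delta> where "\<delta> = \<eta> * (p * (1 - p))"
  have "\<delta> > 0" using \<eta> p by (simp add: \<delta>_def)
  then have "(\<lambda>n::nat. real n * ln (real n) * exp (- (2 * \<delta>\<^sup>2) * real n)) \<longlonglongrightarrow> 0"
    by real_asymp
  then have "eventually (\<lambda>n. real n * ln (real n) * exp (- (2 * \<delta>\<^sup>2) * real n) < \<epsilon> / 4) sequentially"
    using \<epsilon> by (intro order_tendstoD(2)) auto
  then show ?thesis
    using eventually_gt_at_top[of 0]
  proof eventually_elim
    case (elim n)
    have "1 / (2 * (1 - \<eta>)) \<le> 1/2 + \<eta>"
      using \<eta> by (simp add: field_simps)
    then have "1 / (2 * (1 - \<eta>) * real n) \<le> (1/2 + \<epsilon>/2) / real n"
      using elim \<eta> by (simp add: divide_right_mono flip: divide_divide_eq_left)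
    moreover have "ln (real n) * (2 * exp (- 2 * real n * \<delta>\<^sup>2))
        = 2 * (real n * ln (real n) * exp (- (2 * \<delta>\<^sup>2) * real n)) / real n"
      using elim by (simp add: field_simps)
    moreover have "\<dots> \<le> (\<epsilon> / 2) / real n"
      using elim by (intro divide_right_mono) auto
    ultimately show ?case
      using binomial_expectation_freq_cross_entropy_le[OF p \<eta>(1) _ elim(2)] \<eta>
      unfolding \<delta>_def by (simp add: add_divide_distrib)
  qed
qed

text \<open>The tangent of \<open>ln\<close> at \<open>q\<close>, evaluated at the frequency \<open>k / n\<close>. At \<open>k = 0\<close> the
  empirical posterior has denominator \<open>0\<close> and its loss is the junk value \<open>- ln 0 = 0\<close>; there the
  bound is corrected to \<open>0\<close>.\<close>
definition ln_freq_bound :: "real \<Rightarrow> nat \<Rightarrow> nat \<Rightarrow> real" where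
  "ln_freq_bound q n k = ln q + (real k / real n) / q - 1 + (if k = 0 then 1 - ln q else 0)"

lemma ln_le_ln_freq_bound:
  assumes "q > 0" "k > 0" "n > 0"
  shows "ln (real k / real n) \<le> ln_freq_bound q n k"
proof -
  have "ln (real k / real n / q) \<le> real k / real n / q - 1"
    using assms by (intro ln_le_minus_one) simp
  then show ?thesis
    using assms by (simp add: ln_freq_bound_def ln_div ln_mult)
qed

lemma binomial_expectation_ln_freq_bound:
  assumes "n > 0" "q > 0"
  shows "binomial_expectation n q (ln_freq_bound q n) = ln q + (1 - q) ^ n * (1 - ln q)"
proof -
  have "ln_freq_bound q n =
          (\<lambda>k. (ln q - 1) + (1 / q) * (real k / real n) + (if k = 0 then 1 - ln q else 0))"
    by (auto simp: ln_freq_bound_def fun_eq_iff)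
  then have "binomial_expectation n q (ln_freq_bound q n) = (ln q - 1) + (1 / q) * q + (1 - q) ^ n * (1 - ln q)"
    using assms(1)
    by (simp only: binomial_expectation_add binomial_expectation_const binomial_expectation_cmult
          binomial_expectation_freq binomial_expectation_at_0)
  then show ?thesis
    using assms(2) by simp
qed

lemma sum_neg_ln_clipped_pos:
  assumes "finite I" "\<And>i. i \<in> I \<Longrightarrow> x i > 0"
  shows "(\<Sum>i\<in>I. neg_ln_clipped n (x i)) = - ln (\<Prod>i\<in>I. x i)"
  using assms by (simp add: neg_ln_clipped_def ln_prod sum_negf[symmetric] less_imp_neq[symmetric])

lemma neg_ln_posterior_le:
  fixes x :: "'i \<Rightarrow> real"
  assumes n: "n > 0" and I: "finite I" and x: "\<And>i. i \<in> I \<Longrightarrow> 0 \<le> x i \<and> x i \<le> 1"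
    and Y: "0 < Y" "Y \<le> 1" and q: "q > 0"
  shows "- ln ((\<Prod>i\<in>I. x i) * Y / (real k / real n))
           \<le> (\<Sum>i\<in>I. neg_ln_clipped n (x i)) - ln Y + ln_freq_bound q n k"
proof -
  have clipped_nonneg: "(\<Sum>i\<in>I. neg_ln_clipped n (x i)) \<ge> 0"
    using x n by (intro sum_nonneg neg_ln_clipped_nonneg) auto
  have "- ln Y \<ge> 0" using Y by simp
  consider "k = 0" | i where "k > 0" "i \<in> I" "x i = 0" | "k > 0" "\<And>i. i \<in> I \<Longrightarrow> x i > 0"
    using x by (metis less_eq_real_def neq0_conv)
  then show ?thesis
  proof cases
    case 1
    then show ?thesis
      using clipped_nonneg \<open>- ln Y \<ge> 0\<close> by (simp add: ln_freq_bound_def)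
  next
    case (2 i)
    have "ln (real n) = neg_ln_clipped n (x i)"
      using 2 by (simp add: neg_ln_clipped_def)
    also have "\<dots> \<le> (\<Sum>i\<in>I. neg_ln_clipped n (x i))"
      using x n I 2 by (intro member_le_sum neg_ln_clipped_nonneg) auto
    finally have "ln (real n) \<le> (\<Sum>i\<in>I. neg_ln_clipped n (x i))" .
    moreover have "- ln (real n) \<le> ln (real k / real n)"
      using 2 n by (simp add: ln_div)
    moreover have "(\<Prod>i\<in>I. x i) = 0"
      using I 2 by (meson prod_zero_iff)
    ultimately show ?thesis
      using ln_le_ln_freq_bound[OF q 2(1) n] \<open>- ln Y \<ge> 0\<close> by simp
  next
    case 3
    then have "(\<Prod>i\<in>I. x i) > 0" by (simp add: prod_pos)
    then have "- ln ((\<Prod>i\<in>I. x i) * Y / (real k / real n))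
                 = - ln (\<Prod>i\<in>I. x i) - ln Y + ln (real k / real n)"
      using Y n 3(1) by (simp add: ln_div ln_mult_pos)
    then show ?thesis
      using ln_le_ln_freq_bound[OF q 3(1) n] sum_neg_ln_clipped_pos[OF I 3(2)] by simp
  qed
qed

section \<open>Eventual bounds of order \<open>1 / n\<close>\<close>

lemma eventually_power_mult_le_div:
  assumes q: "0 < q" "q \<le> 1" and \<epsilon>: "\<epsilon> > 0"
  shows "eventually (\<lambda>n. (1 - q) ^ n * K \<le> \<epsilon> / real n) sequentially"
proof -
  have "(\<lambda>n::nat. real n * exp (- q * real n)) \<longlonglongrightarrow> 0"
    using q by real_asymp
  then have "eventually (\<lambda>n. real n * exp (- q * real n) < \<epsilon> / (\<bar>K\<bar> + 1)) sequentially"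
    using \<epsilon> by (intro order_tendstoD(2)) auto
  then show ?thesis
    using eventually_gt_at_top[of 0]
  proof eventually_elim
    case (elim n)
    have "(1 - q) ^ n \<le> exp (- q) ^ n"
      using q by (intro power_mono) (auto simp: exp_ge_add_one_self[of "-q", simplified])
    also have "\<dots> = exp (- q * real n)"
      by (simp add: exp_of_nat_mult[symmetric] mult.commute)
    finally have "(1 - q) ^ n \<le> exp (- q * real n)" .
    then have "(1 - q) ^ n * \<bar>K\<bar> \<le> exp (- q * real n) * \<bar>K\<bar>"
      by (intro mult_right_mono) auto
    moreover have "(1 - q) ^ n * K \<le> (1 - q) ^ n * \<bar>K\<bar>"
      using q by (intro mult_left_mono) auto
    ultimately have "(1 - q) ^ n * K \<le> exp (- q * real n) * \<bar>K\<bar>"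
      by linarith
    also have "\<dots> = (real n * exp (- q * real n)) * \<bar>K\<bar> / real n"
      using elim by simp
    also have "\<dots> \<le> (\<epsilon> / (\<bar>K\<bar> + 1)) * \<bar>K\<bar> / real n"
      using elim by (intro divide_right_mono mult_right_mono) auto
    also have "\<dots> \<le> \<epsilon> / real n"
      using \<epsilon> by (intro divide_right_mono) (auto simp: field_simps)
    finally show ?case .
  qed
qed

lemma eventually_sum_le:
  fixes f g :: "'i \<Rightarrow> 'n \<Rightarrow> 'a :: ordered_comm_monoid_add"
  assumes "finite I" "\<And>i. i \<in> I \<Longrightarrow> eventually (\<lambda>n. f i n \<le> g i n) F"
  shows "eventually (\<lambda>n. (\<Sum>i\<in>I. f i n) \<le> (\<Sum>i\<in>I. g i n)) F"
proof -
  have "eventually (\<lambda>n. \<forall>i\<in>I. f i n \<le> g i n) F"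
    using assms by (intro eventually_ball_finite) auto
  then show ?thesis
    by eventually_elim (simp add: sum_mono)
qed

lemma max_0_in_smallo_inverse:
  assumes "\<And>c. c > 0 \<Longrightarrow> eventually (\<lambda>n. f n \<le> c / real n) sequentially"
  shows "(\<lambda>n. max 0 (f n)) \<in> o(\<lambda>n. 1 / real n)"
proof (rule landau_o.smallI)
  fix c :: real assume "c > 0"
  with assms show "eventually (\<lambda>n. norm (max 0 (f n)) \<le> c * norm (1 / real n)) sequentially"
    by (auto elim: eventually_mono)
qed

section \<open>Sums of products over blocks of coordinates\<close>

definition glue_blocks :: "'i set set \<Rightarrow> ('i set \<Rightarrow> 'i \<Rightarrow> 'a) \<Rightarrow> 'i \<Rightarrow> 'a" where
  "glue_blocks F g = (\<lambda>i\<in>\<Union>F. g (THE b. b \<in> F \<and> i \<in> b) i)"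

lemma glue_blocks_apply:
  assumes "disjoint F" "b \<in> F" "i \<in> b"
  shows "glue_blocks F g i = g b i"
proof -
  have "(THE b. b \<in> F \<and> i \<in> b) = b"
    using assms disjointD[OF assms(1)] by (intro the_equality) auto
  then show ?thesis using assms by (auto simp: glue_blocks_def)
qed

lemma glue_blocks_PiE:
  assumes "disjoint F" "g \<in> PiE F (\<lambda>b. PiE b B)"
  shows "glue_blocks F g \<in> PiE (\<Union>F) B"
proof (rule PiE_I)
  fix i assume "i \<in> \<Union>F"
  then obtain b where b: "b \<in> F" "i \<in> b" by blast
  then show "glue_blocks F g i \<in> B i"
    unfolding glue_blocks_apply[OF assms(1) b] by (intro PiE_mem[OF PiE_mem[OF assms(2)]])
qed (simp add: glue_blocks_def)

lemma restrict_glue_blocks: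
  assumes "disjoint F" "g \<in> PiE F (\<lambda>b. PiE b B)"
  shows "(\<lambda>b\<in>F. restrict (glue_blocks F g) b) = g"
proof
  fix b
  show "(\<lambda>b\<in>F. restrict (glue_blocks F g) b) b = g b"
  proof (cases "b \<in> F")
    case True
    have "restrict (glue_blocks F g) b = restrict (g b) b"
      by (intro restrict_ext glue_blocks_apply[OF assms(1) True])
    also have "\<dots> = g b"
      using PiE_mem[OF assms(2) True] by (intro extensional_restrict) (simp add: PiE_def)
    finally show ?thesis using True by simp
  qed (use assms(2) in \<open>simp add: PiE_def extensional_def\<close>)
qed

lemma glue_blocks_restrict:
  assumes "disjoint F" "s \<in> PiE (\<Union>F) B"
  shows "glue_blocks F (\<lambda>b\<in>F. restrict s b) = s"
proof
  fix i
  show "glue_blocks F (\<lambda>b\<in>F. restrict s b) i = s i"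
  proof (cases "i \<in> \<Union>F")
    case True
    then obtain b where b: "b \<in> F" "i \<in> b" by blast
    then show ?thesis unfolding glue_blocks_apply[OF assms(1) b] by simp
  qed (use assms(2) in \<open>simp add: glue_blocks_def PiE_def extensional_def\<close>)
qed

lemma bij_betw_restrict_blocks:
  assumes "disjoint F"
  shows "bij_betw (\<lambda>s. \<lambda>b\<in>F. restrict s b) (PiE (\<Union>F) B) (PiE F (\<lambda>b. PiE b B))"
proof (rule bij_betw_byWitness[where f' = "glue_blocks F"])
  show "(\<lambda>s. \<lambda>b\<in>F. restrict s b) ` PiE (\<Union>F) B \<subseteq> PiE F (\<lambda>b. PiE b B)"
    by (auto simp: PiE_iff)
  show "glue_blocks F ` PiE F (\<lambda>b. PiE b B) \<subseteq> PiE (\<Union>F) B"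
    using glue_blocks_PiE[OF assms] by blast
  show "\<forall>s\<in>PiE (\<Union>F) B. glue_blocks F (\<lambda>b\<in>F. restrict s b) = s"
    using glue_blocks_restrict[OF assms] by blast
  show "\<forall>g\<in>PiE F (\<lambda>b. PiE b B). (\<lambda>b\<in>F. restrict (glue_blocks F g) b) = g"
    using restrict_glue_blocks[OF assms] by blast
qed

lemma sum_PiE_prod_blocks:
  fixes h :: "'i set \<Rightarrow> ('i \<Rightarrow> 'a) \<Rightarrow> 'c :: comm_semiring_1"
  assumes F: "finite F" "disjoint F" "\<And>b. b \<in> F \<Longrightarrow> finite b"
    and B: "\<And>i. i \<in> \<Union>F \<Longrightarrow> finite (B i)"
    and local: "\<And>b s s'. b \<in> F \<Longrightarrow> (\<And>i. i \<in> b \<Longrightarrow> s i = s' i) \<Longrightarrow> h b s = h b s'"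
  shows "(\<Sum>s\<in>PiE (\<Union>F) B. \<Prod>b\<in>F. h b s) = (\<Prod>b\<in>F. \<Sum>t\<in>PiE b B. h b t)"
proof -
  have "(\<Prod>b\<in>F. \<Sum>t\<in>PiE b B. h b t) = (\<Sum>g\<in>PiE F (\<lambda>b. PiE b B). \<Prod>b\<in>F. h b (g b))"
    using F B by (intro prod_sum_PiE) (auto intro: finite_PiE)
  also have "\<dots> = (\<Sum>s\<in>PiE (\<Union>F) B. \<Prod>b\<in>F. h b ((\<lambda>b\<in>F. restrict s b) b))"
    by (rule sum.reindex_bij_betw[OF bij_betw_restrict_blocks[OF F(2)], symmetric])
  also have "\<dots> = (\<Sum>s\<in>PiE (\<Union>F) B. \<Prod>b\<in>F. h b s)"
    by (intro sum.cong prod.cong refl local) auto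
  finally show ?thesis ..
qed

lemma PiE_fix_coordinates:
  assumes "J \<subseteq> I" "\<And>i. i \<in> J \<Longrightarrow> s0 i \<in> B i"
  shows "{s\<in>PiE I B. \<forall>i\<in>J. s i = s0 i} = PiE I (\<lambda>i. if i \<in> J then {s0 i} else B i)"
  using assms by (auto simp: PiE_iff extensional_def split: if_splits)

lemma sum_PiE_prod_blocks_fixed:
  fixes h :: "'i set \<Rightarrow> ('i \<Rightarrow> 'a) \<Rightarrow> 'c :: comm_semiring_1"
  assumes F: "finite F" "disjoint F" "\<And>b. b \<in> F \<Longrightarrow> finite b"
    and B: "\<And>i. i \<in> \<Union>F \<Longrightarrow> finite (B i)"
    and local: "\<And>b s s'. b \<in> F \<Longrightarrow> (\<And>i. i \<in> b \<Longrightarrow> s i = s' i) \<Longrightarrow> h b s = h b s'"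
    and b0: "b0 \<in> F" and s0: "s0 \<in> PiE (\<Union>F) B"
  shows "(\<Sum>s\<in>{s\<in>PiE (\<Union>F) B. \<forall>i\<in>b0. s i = s0 i}. \<Prod>b\<in>F. h b s)
           = h b0 s0 * (\<Prod>b\<in>F - {b0}. \<Sum>t\<in>PiE b B. h b t)"
proof -
  define B' where "B' i = (if i \<in> b0 then {s0 i} else B i)" for i
  have "{s\<in>PiE (\<Union>F) B. \<forall>i\<in>b0. s i = s0 i} = PiE (\<Union>F) B'"
    unfolding B'_def using b0 PiE_mem[OF s0] by (intro PiE_fix_coordinates) auto
  then have "(\<Sum>s\<in>{s\<in>PiE (\<Union>F) B. \<forall>i\<in>b0. s i = s0 i}. \<Prod>b\<in>F. h b s)
               = (\<Prod>b\<in>F. \<Sum>t\<in>PiE b B'. h b t)"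
    using B by (simp only:) (intro sum_PiE_prod_blocks[OF F _ local], auto simp: B'_def)
  also have "\<dots> = (\<Sum>t\<in>PiE b0 B'. h b0 t) * (\<Prod>b\<in>F - {b0}. \<Sum>t\<in>PiE b B'. h b t)"
    using F b0 by (simp add: prod.remove)
  also have "PiE b0 B' = PiE b0 (\<lambda>i. {restrict s0 b0 i})"
    by (intro PiE_cong) (simp add: B'_def)
  also have "\<dots> = {restrict s0 b0}"
    by (rule PiE_singleton) (rule restrict_extensional)
  also have "(\<Sum>t\<in>{restrict s0 b0}. h b0 t) = h b0 s0"
    using local[OF b0, of "restrict s0 b0" s0] by simp
  also have "(\<Prod>b\<in>F - {b0}. \<Sum>t\<in>PiE b B'. h b t) = (\<Prod>b\<in>F - {b0}. \<Sum>t\<in>PiE b B. h b t)"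
  proof (intro prod.cong refl)
    fix b assume "b \<in> F - {b0}"
    then have "b \<inter> b0 = {}"
      using b0 disjointD[OF F(2)] by auto
    then have "PiE b B' = PiE b B"
      by (intro PiE_cong) (auto simp: B'_def)
    then show "(\<Sum>t\<in>PiE b B'. h b t) = (\<Sum>t\<in>PiE b B. h b t)"
      by simp
  qed
  finally show ?thesis by simp
qed

section \<open>I.i.d. labelled datasets\<close>

lemma pm1_cases: "v \<in> pm1 \<Longrightarrow> v = -1 \<or> v = 1"
  by (simp add: pm1_def)

lemma finite_pm1 [simp]: "finite pm1"
  by (simp add: pm1_def)

lemma finite_cube [simp]: "finite (cube m)"
  by (simp add: cube_def finite_PiE)

lemma cube_memD: "s \<in> cube m \<Longrightarrow> i < m \<Longrightarrow> s i \<in> pm1"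
  by (auto simp: cube_def)

lemma sum_pm1: "(\<Sum>y\<in>pm1. f y) = f (-1) + f 1"
  by (simp add: pm1_def)

lemma sum_mult_pred_split:
  fixes f :: "'a \<Rightarrow> real"
  assumes "finite X" "sum f X = 1"
  shows "(\<Sum>x\<in>X. f x * g (\<phi> x))
           = (\<Sum>x\<in>{x\<in>X. \<phi> x}. f x) * g True + (1 - (\<Sum>x\<in>{x\<in>X. \<phi> x}. f x)) * g False"
proof -
  have "(\<Sum>x\<in>X. f x * g (\<phi> x)) = (\<Sum>x\<in>X. if \<phi> x then f x * g True else f x * g False)"
    by (intro sum.cong) auto
  also have "\<dots> = (\<Sum>x\<in>{x\<in>X. \<phi> x}. f x) * g True + (\<Sum>x\<in>{x\<in>X. \<not> \<phi> x}. f x) * g False"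
    using assms(1) by (simp add: sum.If_cases sum_distrib_right Collect_conj_eq Int_commute Compl_eq)
  also have "(\<Sum>x\<in>{x\<in>X. \<not> \<phi> x}. f x) = 1 - (\<Sum>x\<in>{x\<in>X. \<phi> x}. f x)"
  proof -
    have "{x\<in>X. \<not> \<phi> x} = X - {x\<in>X. \<phi> x}" by auto
    then show ?thesis using assms by (simp add: sum_diff)
  qed
  finally show ?thesis .
qed

definition sample_count ::
  "nat \<Rightarrow> (nat \<Rightarrow> real \<times> (nat \<Rightarrow> real)) \<Rightarrow> (real \<times> (nat \<Rightarrow> real) \<Rightarrow> bool) \<Rightarrow> nat" where
  "sample_count n D \<phi> = card {t\<in>{..<n}. \<phi> (D t)}"

lemma sample_count_le: "sample_count n D \<phi> \<le> n"
  unfolding sample_count_def by (rule card_mono[of "{..<n}", simplified]) auto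

lemma sample_count_upd:
  "sample_count (Suc n) (D(n := x)) \<phi> = sample_count n D \<phi> + (if \<phi> x then 1 else 0)"
proof -
  have "{t\<in>{..<Suc n}. \<phi> ((D(n := x)) t)} = {t\<in>{..<n}. \<phi> (D t)} \<union> (if \<phi> x then {n} else {})"
    by (auto simp: less_Suc_eq)
  then show ?thesis by (simp add: sample_count_def card_Un_disjoint)
qed

lemma pr_data_upd: "pr_data P (Suc n) (D(n := x)) = P (fst x) (snd x) * pr_data P n D"
  by (simp add: pr_data_def)

lemma sum_datasets_Suc:
  "(\<Sum>D\<in>datasets m (Suc n). G D) = (\<Sum>x\<in>pm1 \<times> cube m. \<Sum>D\<in>datasets m n. G (D(n := x)))"
proof -
  let ?X = "pm1 \<times> cube m"
  have "datasets m (Suc n) = (\<lambda>(x, D). D(n := x)) ` (?X \<times> datasets m n)"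
    unfolding datasets_def lessThan_Suc by (rule PiE_insert_eq)
  moreover have "inj_on (\<lambda>(x, D). D(n := x)) (?X \<times> datasets m n)"
    unfolding datasets_def using inj_combinator[of n "{..<n}" "\<lambda>_. ?X"] by simp
  ultimately show ?thesis
    by (simp add: sum.reindex sum.cartesian_product split_def)
qed

lemma sum_datasets_sample_count:
  assumes total: "(\<Sum>x\<in>pm1 \<times> cube m. P (fst x) (snd x)) = 1"
    and q: "q = (\<Sum>x\<in>{x\<in>pm1 \<times> cube m. \<phi> x}. P (fst x) (snd x))"
  shows "(\<Sum>D\<in>datasets m n. pr_data P n D * F (sample_count n D \<phi>)) = binomial_expectation n q F"
proof (induction n arbitrary: F)
  case 0
  have "datasets m 0 = {\<lambda>_. undefined}" by (simp add: datasets_def)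
  then show ?case by (simp add: pr_data_def sample_count_def binomial_expectation_0)
next
  case (Suc n)
  have "(\<Sum>D\<in>datasets m (Suc n). pr_data P (Suc n) D * F (sample_count (Suc n) D \<phi>))
          = (\<Sum>x\<in>pm1 \<times> cube m. P (fst x) (snd x) * (\<Sum>D\<in>datasets m n.
               pr_data P n D * F (sample_count n D \<phi> + (if \<phi> x then 1 else 0))))"
    by (simp add: sum_datasets_Suc pr_data_upd sample_count_upd sum_distrib_left mult.assoc)
  also have "\<dots> = (\<Sum>x\<in>pm1 \<times> cube m. P (fst x) (snd x) *
                    binomial_expectation n q (\<lambda>k. F (k + (if \<phi> x then 1 else 0))))"
  proof (intro sum.cong refl)
    fix x
    show "P (fst x) (snd x) * (\<Sum>D\<in>datasets m n.
            pr_data P n D * F (sample_count n D \<phi> + (if \<phi> x then 1 else 0)))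
          = P (fst x) (snd x) * binomial_expectation n q (\<lambda>k. F (k + (if \<phi> x then 1 else 0)))"
      using Suc.IH[of "\<lambda>k. F (k + (if \<phi> x then 1 else 0))"] by simp
  qed
  also have "\<dots> = q * binomial_expectation n q (\<lambda>k. F (Suc k)) + (1 - q) * binomial_expectation n q F"
    using sum_mult_pred_split[OF _ total,
        of "\<lambda>b. binomial_expectation n q (\<lambda>k. F (k + (if b then 1 else 0)))" \<phi>]
    by (simp add: q)
  finally show ?case by (simp add: binomial_expectation_Suc)
qed

lemma src_cond_acc_est:
  assumes D: "D \<in> datasets m n" and n: "n > 0" and i: "i < m" and y: "y \<in> pm1" and v: "v \<in> pm1"
  defines "k \<equiv> sample_count n D (\<lambda>x. snd x i * fst x = 1)"
  shows "src_cond (acc_est n D i) v y = (if v * y = 1 then real k / real n else 1 - real k / real n)"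
proof -
  have pm: "snd (D t) i * fst (D t) = 2 * (if snd (D t) i * fst (D t) = 1 then 1 else 0) - 1"
    if "t < n" for t
  proof -
    have "fst (D t) \<in> pm1" "snd (D t) \<in> cube m"
      using D that by (auto simp: datasets_def PiE_iff mem_Times_iff)
    then show ?thesis
      using pm1_cases[of "fst (D t)"] pm1_cases[of "snd (D t) i"] cube_memD i by fastforce
  qed
  have "(\<Sum>t<n. snd (D t) i * fst (D t))
          = (\<Sum>t<n. 2 * (if snd (D t) i * fst (D t) = 1 then 1 else 0) - 1)"
    by (intro sum.cong refl) (rule pm, simp)
  also have "\<dots> = 2 * (\<Sum>t<n. if snd (D t) i * fst (D t) = 1 then 1 else 0) - real n"
    by (simp add: sum_subtractf sum_distrib_left)
  also have "(\<Sum>t<n. if snd (D t) i * fst (D t) = 1 then 1 else 0) = real k"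
    by (simp add: k_def sample_count_def sum.inter_filter[symmetric])
  finally have acc: "acc_est n D i = (2 * real k - real n) / real n"
    by (simp add: acc_est_def)
  have "v * y = 1 \<or> v * y = -1"
    using pm1_cases[OF v] pm1_cases[OF y] by auto
  then show ?thesis
  proof
    assume vy: "v * y = 1"
    show ?thesis unfolding src_cond_def acc vy using n by (simp add: field_simps)
  next
    assume vy: "v * y = -1"
    show ?thesis unfolding src_cond_def acc vy using n by (simp add: field_simps)
  qed
qed

section \<open>The Ising model on a matching\<close>

definition pointwise_cmi ::
  "(real \<Rightarrow> (nat \<Rightarrow> real) \<Rightarrow> real) \<Rightarrow> nat \<Rightarrow> nat \<Rightarrow> nat \<Rightarrow> real \<Rightarrow> real \<Rightarrow> real \<Rightarrow> real" where
  "pointwise_cmi P m i j y a b =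
     ln ((pr2 P m i j y a b / prY P m y) / ((pr1 P m i y a / prY P m y) * (pr1 P m j y b / prY P m y)))"

lemma cmi_eq_sum_pointwise_cmi:
  assumes i: "i < m" and j: "j < m"
  shows "cmi P m i j = (\<Sum>y\<in>pm1. \<Sum>s\<in>cube m. P y s * pointwise_cmi P m i j y (s i) (s j))"
proof -
  have "(\<Sum>a\<in>pm1. \<Sum>b\<in>pm1. pr2 P m i j y a b * pointwise_cmi P m i j y a b)
          = (\<Sum>s\<in>cube m. P y s * pointwise_cmi P m i j y (s i) (s j))" for y
  proof -
    define G where "G ab = (\<Sum>s\<in>{s\<in>cube m. (s i, s j) = ab}.
                               P y s * pointwise_cmi P m i j y (s i) (s j))" for ab
    have "(\<Sum>a\<in>pm1. \<Sum>b\<in>pm1. pr2 P m i j y a b * pointwise_cmi P m i j y a b)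
            = (\<Sum>a\<in>pm1. \<Sum>b\<in>pm1. G (a, b))"
      unfolding pr2_def G_def sum_distrib_right by (intro sum.cong refl) auto
    also have "\<dots> = (\<Sum>ab\<in>pm1 \<times> pm1. G ab)"
      by (rule sum.cartesian_product'[symmetric])
    also have "\<dots> = (\<Sum>s\<in>cube m. P y s * pointwise_cmi P m i j y (s i) (s j))"
      unfolding G_def using cube_memD[OF _ i] cube_memD[OF _ j] by (intro sum.group) auto
    finally show ?thesis .
  qed
  then show ?thesis
    unfolding cmi_def pointwise_cmi_def by simp
qed

locale ising_matching =
  fixes m :: nat and thY :: real and th :: "nat \<Rightarrow> real"
    and E :: "nat set set" and thE :: "nat set \<Rightarrow> real"
  assumes pairs: "\<forall>e\<in>E. e \<subseteq> {..<m} \<and> card e = 2"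
    and pairs_disjoint: "\<forall>e\<in>E. \<forall>e'\<in>E. e \<noteq> e' \<longrightarrow> e \<inter> e' = {}"
begin

abbreviation P where "P \<equiv> ising m thY th E thE"

lemma finite_E: "finite E"
  by (rule finite_subset[of _ "Pow {..<m}"]) (use pairs in auto)

lemma pair_Min_Max:
  assumes "e \<in> E"
  shows "e = {Min e, Max e}" "Min e \<noteq> Max e" "Min e < m" "Max e < m"
proof -
  obtain x y where xy: "e = {x, y}" "x \<noteq> y"
    using pairs assms by (auto simp: card_2_iff)
  then have "Min e = min x y" "Max e = max x y" by auto
  then show "e = {Min e, Max e}" "Min e \<noteq> Max e" "Min e < m" "Max e < m"
    using xy pairs assms by (auto simp: min_def max_def)
qed

lemma cube_ne_empty: "cube m \<noteq> {}"
proof -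
  have "restrict (\<lambda>_. 1) {..<m} \<in> cube m" by (simp add: cube_def pm1_def)
  then show ?thesis by auto
qed

lemma ising_Z_pos: "ising_Z m thY th E thE > 0"
  unfolding ising_Z_def using cube_ne_empty by (intro sum_pos) (auto simp: pm1_def)

lemma P_pos: "P y s > 0"
  using ising_Z_pos by (simp add: ising_def)

lemma sum_P: "(\<Sum>y\<in>pm1. \<Sum>s\<in>cube m. P y s) = 1"
  using ising_Z_pos by (simp add: ising_def sum_divide_distrib[symmetric] ising_Z_def[symmetric])

lemma sum_P_pairs: "(\<Sum>x\<in>pm1 \<times> cube m. P (fst x) (snd x)) = 1"
  using sum_P by (simp add: sum.cartesian_product case_prod_beta)

lemma prY_pos: "prY P m y > 0"
  unfolding prY_def using cube_ne_empty P_pos by (intro sum_pos) auto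

lemma prLam_pos: "prLam P s > 0"
  unfolding prLam_def using P_pos by (intro sum_pos) (auto simp: pm1_def)

lemma prY_sum: "prY P m (-1) + prY P m 1 = 1"
  using sum_P by (simp add: prY_def sum_pm1)

lemma prY_le_1: "y \<in> pm1 \<Longrightarrow> prY P m y \<le> 1"
  using prY_sum prY_pos[of "-1"] prY_pos[of 1] by (auto simp: pm1_def)

lemma prLam_le_1:
  assumes "s \<in> cube m"
  shows "prLam P s \<le> 1"
proof -
  have "prLam P s \<le> (\<Sum>y\<in>pm1. \<Sum>s\<in>cube m. P y s)"
    unfolding prLam_def using assms P_pos by (intro sum_mono member_le_sum) (auto intro: less_imp_le)
  then show ?thesis by (simp add: sum_P)
qed

lemma pr1_pos:
  assumes "i < m" "a \<in> pm1"
  shows "pr1 P m i y a > 0"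
proof -
  have "restrict (\<lambda>k. if k = i then a else 1) {..<m} \<in> {s\<in>cube m. s i = a}"
    using assms by (auto simp: cube_def pm1_def)
  then show ?thesis
    unfolding pr1_def using P_pos by (intro sum_pos) auto
qed

lemma pr1_add: "i < m \<Longrightarrow> pr1 P m i y 1 + pr1 P m i y (-1) = prY P m y"
  unfolding pr1_def prY_def using cube_memD[of _ m i]
  by (subst sum.union_disjoint[symmetric]) (auto intro!: sum.cong dest: pm1_cases)

definition flip :: "(nat \<Rightarrow> real) \<Rightarrow> nat \<Rightarrow> real" where
  "flip s = restrict (\<lambda>k. - s k) {..<m}"

lemma flip_cube: "s \<in> cube m \<Longrightarrow> flip s \<in> cube m"
  unfolding flip_def cube_def by (auto simp: PiE_iff pm1_def)

lemma flip_flip: "s \<in> cube m \<Longrightarrow> flip (flip s) = s"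
  unfolding flip_def cube_def by (auto simp: PiE_iff extensional_def fun_eq_iff)

text \<open>All interactions are even in the sources except the label-source ones, which are odd
  in both \<open>Y\<close> and the sources; so flipping all spins only changes the weight of \<open>Y\<close>.\<close>
lemma P_flip:
  assumes s: "s \<in> cube m"
  shows "P (-1) (flip s) = exp (- 2 * thY) * P 1 s"
proof -
  have "(\<Prod>i\<in>e. flip s i) = (\<Prod>i\<in>e. s i)" if "e \<in> E" for e
  proof -
    have "(\<Prod>i\<in>e. flip s i) = (\<Prod>i\<in>e. (-1) * s i)"
      using pairs that by (intro prod.cong) (auto simp: flip_def)
    also have "\<dots> = (\<Prod>i\<in>e. -1) * (\<Prod>i\<in>e. s i)"
      by (rule prod.distrib)
    finally show ?thesis using pairs that by simp
  qed
  moreover have "(\<Sum>i<m. th i * flip s i * (-1)) = (\<Sum>i<m. th i * s i * 1)"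
    by (intro sum.cong) (auto simp: flip_def)
  ultimately have energy:
    "ising_energy m thY th E thE (-1) (flip s) = ising_energy m thY th E thE 1 s - 2 * thY"
    unfolding ising_energy_def by (simp cong: sum.cong)
  show ?thesis
    unfolding ising_def energy by (simp add: exp_diff exp_minus field_simps)
qed

lemma sum_P_flip:
  "(\<Sum>s\<in>{s\<in>cube m. Q s}. P (-1) s) = exp (- 2 * thY) * (\<Sum>s\<in>{s\<in>cube m. Q (flip s)}. P 1 s)"
proof -
  have "bij_betw flip {s\<in>cube m. Q (flip s)} {s\<in>cube m. Q s}"
    by (rule bij_betw_byWitness[where f' = flip]) (auto simp: flip_flip flip_cube)
  then have "(\<Sum>s\<in>{s\<in>cube m. Q s}. P (-1) s) = (\<Sum>s\<in>{s\<in>cube m. Q (flip s)}. P (-1) (flip s))"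
    by (rule sum.reindex_bij_betw[symmetric])
  also have "\<dots> = (\<Sum>s\<in>{s\<in>cube m. Q (flip s)}. exp (- 2 * thY) * P 1 s)"
    by (intro sum.cong) (auto simp: P_flip)
  finally show ?thesis by (simp add: sum_distrib_left)
qed

lemma prY_flip: "prY P m (-1) = exp (- 2 * thY) * prY P m 1"
  using sum_P_flip[of "\<lambda>_. True"] by (simp add: prY_def)

lemma pr1_flip:
  assumes "i < m"
  shows "pr1 P m i (-1) (-a) = exp (- 2 * thY) * pr1 P m i 1 a"
proof -
  have "{s\<in>cube m. flip s i = -a} = {s\<in>cube m. s i = a}"
    using assms by (auto simp: flip_def)
  then show ?thesis using sum_P_flip[of "\<lambda>s. s i = -a"] by (simp add: pr1_def)
qed

definition agree_prob :: "nat \<Rightarrow> real" where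
  "agree_prob i = (\<Sum>x\<in>{x\<in>pm1 \<times> cube m. snd x i * fst x = 1}. P (fst x) (snd x))"

text \<open>By the flip symmetry, source \<open>i\<close> agrees with the label with the same probability
  \<open>agree_prob i\<close> whatever the label is.\<close>
lemma agree_prob_eq:
  assumes "i < m"
  shows "agree_prob i = pr1 P m i 1 1 / prY P m 1"
proof -
  have "agree_prob i = (\<Sum>y\<in>pm1. \<Sum>s\<in>cube m. if s i * y = 1 then P y s else 0)"
    unfolding agree_prob_def
    by (simp add: sum.inter_filter sum.cartesian_product case_prod_beta)
  also have "\<dots> = pr1 P m i (-1) (-1) + pr1 P m i 1 1"
    unfolding pr1_def sum_pm1 by (auto simp: sum.inter_filter intro!: sum.cong)
  also have "\<dots> = (1 + exp (- 2 * thY)) * pr1 P m i 1 1"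
    using pr1_flip[OF assms, of 1] by (simp add: algebra_simps)
  also have "1 + exp (- 2 * thY) = 1 / prY P m 1"
    using prY_sum prY_flip prY_pos[of 1] by (simp add: field_simps)
  finally show ?thesis by simp
qed

lemma agree_prob_bounds:
  assumes "i < m"
  shows "0 < agree_prob i" "agree_prob i < 1"
proof -
  have "pr1 P m i 1 (-1) > 0" "pr1 P m i 1 1 > 0"
    using pr1_pos[OF assms] by (simp_all add: pm1_def)
  then show "0 < agree_prob i" "agree_prob i < 1"
    using agree_prob_eq[OF assms] pr1_add[OF assms, of 1] prY_pos[of 1] by simp_all
qed

lemma pr1_cond:
  assumes i: "i < m" and y: "y \<in> pm1" and a: "a \<in> pm1"
  shows "pr1 P m i y a / prY P m y = (if a * y = 1 then agree_prob i else 1 - agree_prob i)"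
proof -
  have pos: "exp (- 2 * thY) > 0" "prY P m 1 > 0" by (simp_all add: prY_pos)
  have "pr1 P m i 1 (-1) = prY P m 1 - pr1 P m i 1 1"
    using pr1_add[OF i, of 1] by simp
  moreover have "pr1 P m i (-1) 1 = exp (- 2 * thY) * pr1 P m i 1 (-1)"
    using pr1_flip[OF i, of "-1"] by simp
  moreover have "pr1 P m i (-1) (-1) = exp (- 2 * thY) * pr1 P m i 1 1"
    using pr1_flip[OF i, of 1] by simp
  ultimately show ?thesis
    using pm1_cases[OF y] pm1_cases[OF a] agree_prob_eq[OF i] prY_flip pos
    by (auto simp: field_simps)
qed

lemma expectation_ln_pr1_cond:
  assumes i: "i < m"
  shows "(\<Sum>y\<in>pm1. \<Sum>s\<in>cube m. P y s * ln (pr1 P m i y (s i) / prY P m y))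
           = - binary_entropy (agree_prob i)"
proof -
  have "(\<Sum>y\<in>pm1. \<Sum>s\<in>cube m. P y s * ln (pr1 P m i y (s i) / prY P m y))
      = (\<Sum>x\<in>pm1 \<times> cube m. P (fst x) (snd x) *
           (\<lambda>b. ln (if b then agree_prob i else 1 - agree_prob i)) (snd x i * fst x = 1))"
    unfolding sum.cartesian_product case_prod_beta
    using pr1_cond[OF i] cube_memD[OF _ i] by (intro sum.cong refl) (auto simp: mult.commute)
  also have "\<dots> = agree_prob i * ln (agree_prob i) + (1 - agree_prob i) * ln (1 - agree_prob i)"
    by (subst sum_mult_pred_split[OF _ sum_P_pairs]) (simp_all add: agree_prob_def)
  finally show ?thesis by (simp add: binary_entropy_def)
qed

definition unpaired :: "nat set" where
  "unpaired = {..<m} - \<Union>E"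

definition blocks :: "nat set set" where
  "blocks = E \<union> (\<lambda>i. {i}) ` unpaired"

definition block_weight :: "nat set \<Rightarrow> real \<Rightarrow> (nat \<Rightarrow> real) \<Rightarrow> real" where
  "block_weight b y s =
     exp ((\<Sum>i\<in>b. th i * s i * y) + (if b \<in> E then thE b * (\<Prod>i\<in>b. s i) else 0))"

definition block_sum :: "nat set \<Rightarrow> real \<Rightarrow> real" where
  "block_sum b y = (\<Sum>t\<in>PiE b (\<lambda>_. pm1). block_weight b y t)"

definition block_marginal :: "nat set \<Rightarrow> real \<Rightarrow> (nat \<Rightarrow> real) \<Rightarrow> real" where
  "block_marginal b y s = (\<Sum>s'\<in>{s'\<in>cube m. \<forall>i\<in>b. s' i = s i}. P y s')"

lemma finite_unpaired: "finite unpaired"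
  by (simp add: unpaired_def)

lemma singleton_notin_E: "{i} \<notin> E"
  using pairs by fastforce

lemma finite_blocks: "finite blocks"
  using finite_E finite_unpaired by (simp add: blocks_def)

lemma disjoint_blocks: "disjoint blocks"
  using pairs_disjoint unfolding blocks_def unpaired_def disjoint_def by fastforce

lemma Union_blocks: "\<Union>blocks = {..<m}"
  using pairs unfolding blocks_def unpaired_def by auto

lemma finite_block: "b \<in> blocks \<Longrightarrow> finite b"
  using Union_blocks finite_subset[of b "{..<m}"] by auto

lemma cube_blocks: "cube m = PiE (\<Union>blocks) (\<lambda>_. pm1)"
  by (simp add: cube_def Union_blocks)

lemma block_weight_local:
  "(\<And>i. i \<in> b \<Longrightarrow> s i = s' i) \<Longrightarrow> block_weight b y s = block_weight b y s'"
  unfolding block_weight_def by (simp cong: sum.cong prod.cong)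

lemma block_sum_pos: "b \<in> blocks \<Longrightarrow> block_sum b y > 0"
  unfolding block_sum_def
  by (intro sum_pos finite_PiE finite_block)
     (auto simp: block_weight_def PiE_eq_empty_iff pm1_def)

lemma prod_blocks: "(\<Prod>b\<in>blocks. f b) = (\<Prod>e\<in>E. f e) * (\<Prod>i\<in>unpaired. f {i})"
proof -
  have "(\<Prod>b\<in>blocks. f b) = (\<Prod>e\<in>E. f e) * (\<Prod>b\<in>(\<lambda>i. {i}) ` unpaired. f b)"
    unfolding blocks_def
    by (rule prod.union_disjoint) (use finite_E finite_unpaired singleton_notin_E in auto)
  also have "(\<Prod>b\<in>(\<lambda>i. {i}) ` unpaired. f b) = (\<Prod>i\<in>unpaired. f {i})"
    by (rule prod.reindex_cong[where l = "\<lambda>i. {i}"]) auto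
  finally show ?thesis .
qed

lemma P_factor: "P y s = exp (thY * y) / ising_Z m thY th E thE * (\<Prod>b\<in>blocks. block_weight b y s)"
proof -
  have "(\<Sum>i<m. th i * s i * y) = (\<Sum>b\<in>blocks. \<Sum>i\<in>b. th i * s i * y)"
    unfolding Union_blocks[symmetric] using finite_blocks finite_block disjoint_blocks
    by (subst sum.Union_disjoint) (auto simp: disjoint_def)
  moreover have "(\<Sum>e\<in>E. thE e * (\<Prod>i\<in>e. s i))
                   = (\<Sum>b\<in>blocks. if b \<in> E then thE b * (\<Prod>i\<in>b. s i) else 0)"
    using finite_blocks by (simp add: sum.inter_restrict[symmetric] blocks_def Int_absorb1)
  ultimately have "ising_energy m thY th E thE y s
      = thY * y + (\<Sum>b\<in>blocks. (\<Sum>i\<in>b. th i * s i * y)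
                                  + (if b \<in> E then thE b * (\<Prod>i\<in>b. s i) else 0))"
    unfolding ising_energy_def by (simp add: sum.distrib)
  then show ?thesis
    using finite_blocks by (simp add: ising_def exp_add exp_sum block_weight_def)
qed

lemma prY_factor: "prY P m y = exp (thY * y) / ising_Z m thY th E thE * (\<Prod>b\<in>blocks. block_sum b y)"
  unfolding prY_def P_factor block_sum_def cube_blocks sum_distrib_left[symmetric]
  using finite_blocks disjoint_blocks finite_block
  by (subst sum_PiE_prod_blocks) (auto intro: block_weight_local)

lemma block_marginal_factor:
  assumes b: "b \<in> blocks" and s: "s \<in> cube m"
  shows "block_marginal b y s
           = exp (thY * y) / ising_Z m thY th E thE
             * (block_weight b y s * (\<Prod>b'\<in>blocks - {b}. block_sum b' y))"
  unfolding block_marginal_def P_factor block_sum_def cube_blocks sum_distrib_left[symmetric]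
  using finite_blocks disjoint_blocks finite_block b s[unfolded cube_blocks]
  by (subst sum_PiE_prod_blocks_fixed) (auto intro: block_weight_local)

lemma block_marginal_cond:
  assumes b: "b \<in> blocks" and s: "s \<in> cube m"
  shows "block_marginal b y s / prY P m y = block_weight b y s / block_sum b y"
proof -
  have "(\<Prod>b'\<in>blocks. block_sum b' y) = block_sum b y * (\<Prod>b'\<in>blocks - {b}. block_sum b' y)"
    using b finite_blocks by (simp add: prod.remove)
  moreover have "(\<Prod>b'\<in>blocks - {b}. block_sum b' y) > 0"
    using block_sum_pos by (intro prod_pos) auto
  ultimately show ?thesis
    unfolding block_marginal_factor[OF assms] prY_factor
    using ising_Z_pos block_sum_pos[OF b, of y] by (simp add: field_simps)
qed

lemma P_cond_factor:
  assumes s: "s \<in> cube m"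
  shows "P y s / prY P m y = (\<Prod>b\<in>blocks. block_marginal b y s / prY P m y)"
proof -
  have "P y s / prY P m y = (\<Prod>b\<in>blocks. block_weight b y s) / (\<Prod>b\<in>blocks. block_sum b y)"
    unfolding P_factor prY_factor using ising_Z_pos by simp
  also have "\<dots> = (\<Prod>b\<in>blocks. block_weight b y s / block_sum b y)"
    by (simp add: prod_dividef)
  finally show ?thesis
    by (simp add: block_marginal_cond[OF _ s])
qed

lemma block_marginal_pair:
  assumes "e \<in> E"
  shows "block_marginal e y s = pr2 P m (Min e) (Max e) y (s (Min e)) (s (Max e))"
proof -
  have "{s'\<in>cube m. \<forall>i\<in>e. s' i = s i}
          = {s'\<in>cube m. s' (Min e) = s (Min e) \<and> s' (Max e) = s (Max e)}"
    using pair_Min_Max(1)[OF assms] by (metis (no_types, lifting) insert_iff singletonD)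
  then show ?thesis by (simp add: block_marginal_def pr2_def)
qed

lemma block_marginal_singleton: "block_marginal {i} y s = pr1 P m i y (s i)"
  by (simp add: block_marginal_def pr1_def)

lemma block_marginal_pos: "s \<in> cube m \<Longrightarrow> block_marginal b y s > 0"
  unfolding block_marginal_def using P_pos by (intro sum_pos) auto

lemma ln_P_cond:
  assumes s: "s \<in> cube m"
  shows "ln (P y s / prY P m y) =
           (\<Sum>e\<in>E. ln (pr2 P m (Min e) (Max e) y (s (Min e)) (s (Max e)) / prY P m y))
           + (\<Sum>i\<in>unpaired. ln (pr1 P m i y (s i) / prY P m y))"
proof -
  have pos: "block_marginal b y s / prY P m y > 0" for b
    using block_marginal_pos[OF s] prY_pos by simp
  then have ne: "block_marginal b y s / prY P m y \<noteq> 0" for b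
    by (metis less_irrefl)
  have "ln (P y s / prY P m y) = (\<Sum>e\<in>E. ln (block_marginal e y s / prY P m y))
                                 + (\<Sum>i\<in>unpaired. ln (block_marginal {i} y s / prY P m y))"
    unfolding P_cond_factor[OF s] prod_blocks
    using pos by (simp add: ln_mult_pos prod_pos ln_prod[OF finite_E ne] ln_prod[OF finite_unpaired ne])
  then show ?thesis
    by (simp add: block_marginal_pair block_marginal_singleton cong: sum.cong)
qed

lemma sum_lessThan_pairs:
  "(\<Sum>i<m. g i) = (\<Sum>e\<in>E. g (Min e) + g (Max e)) + (\<Sum>i\<in>unpaired. g i)"
proof -
  have "(\<Sum>i<m. g i) = (\<Sum>b\<in>blocks. sum g b)"
    unfolding Union_blocks[symmetric] using finite_blocks finite_block disjoint_blocks
    by (subst sum.Union_disjoint) (auto simp: disjoint_def)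
  also have "\<dots> = (\<Sum>e\<in>E. sum g e) + (\<Sum>i\<in>unpaired. g i)"
    unfolding blocks_def using finite_E finite_unpaired singleton_notin_E
    by (subst sum.union_disjoint) (auto simp: sum.reindex)
  also have "(\<Sum>e\<in>E. sum g e) = (\<Sum>e\<in>E. g (Min e) + g (Max e))"
  proof (intro sum.cong refl)
    fix e assume e: "e \<in> E"
    have "sum g e = sum g {Min e, Max e}"
      using arg_cong[OF pair_Min_Max(1)[OF e], of "sum g"] .
    then show "sum g e = g (Min e) + g (Max e)"
      using pair_Min_Max(2)[OF e] by simp
  qed
  finally show ?thesis .
qed

lemma pointwise_cmi_pair:
  assumes e: "e \<in> E" and s: "s \<in> cube m"
  shows "pointwise_cmi P m (Min e) (Max e) y (s (Min e)) (s (Max e))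
           = ln (pr2 P m (Min e) (Max e) y (s (Min e)) (s (Max e)) / prY P m y)
             - ln (pr1 P m (Min e) y (s (Min e)) / prY P m y)
             - ln (pr1 P m (Max e) y (s (Max e)) / prY P m y)"
proof -
  have pair: "pr2 P m (Min e) (Max e) y (s (Min e)) (s (Max e)) / prY P m y > 0"
    using block_marginal_pos[OF s, of e y] block_marginal_pair[OF e] prY_pos[of y] by simp
  have single: "pr1 P m i y (s i) / prY P m y > 0" if "i < m" for i
    using pr1_pos[OF that cube_memD[OF s that]] prY_pos[of y] by simp
  note Min = single[OF pair_Min_Max(3)[OF e]] and Max = single[OF pair_Min_Max(4)[OF e]]
  show ?thesis
    unfolding pointwise_cmi_def ln_divide_pos[OF pair mult_pos_pos[OF Min Max]] ln_mult_pos[OF Min Max]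
    by simp
qed

lemma sum_pointwise_cmi:
  assumes s: "s \<in> cube m"
  shows "(\<Sum>e\<in>E. pointwise_cmi P m (Min e) (Max e) y (s (Min e)) (s (Max e)))
           = ln (P y s / prY P m y) - (\<Sum>i<m. ln (pr1 P m i y (s i) / prY P m y))"
  unfolding ln_P_cond[OF s] sum_lessThan_pairs[of "\<lambda>i. ln (pr1 P m i y (s i) / prY P m y)"]
  by (simp add: pointwise_cmi_pair[OF _ s] sum_subtractf sum.distrib)

lemma sum_cmi_eq:
  "(\<Sum>e\<in>E. cmi P m (Min e) (Max e))
     = (\<Sum>y\<in>pm1. \<Sum>s\<in>cube m. P y s * ln (P y s / prY P m y))
       + (\<Sum>i<m. binary_entropy (agree_prob i))"
proof -
  have "(\<Sum>e\<in>E. cmi P m (Min e) (Max e))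
          = (\<Sum>e\<in>E. \<Sum>y\<in>pm1. \<Sum>s\<in>cube m.
               P y s * pointwise_cmi P m (Min e) (Max e) y (s (Min e)) (s (Max e)))"
    using pair_Min_Max by (intro sum.cong refl cmi_eq_sum_pointwise_cmi) auto
  also have "\<dots> = (\<Sum>y\<in>pm1. \<Sum>s\<in>cube m.
                     P y s * (\<Sum>e\<in>E. pointwise_cmi P m (Min e) (Max e) y (s (Min e)) (s (Max e))))"
    by (simp add: sum_distrib_left sum.swap[of _ E])
  also have "\<dots> = (\<Sum>y\<in>pm1. \<Sum>s\<in>cube m. P y s * ln (P y s / prY P m y))
                  - (\<Sum>i<m. \<Sum>y\<in>pm1. \<Sum>s\<in>cube m. P y s * ln (pr1 P m i y (s i) / prY P m y))"
    by (simp add: sum_pointwise_cmi right_diff_distrib sum_subtractf sum_distrib_left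
          sum.swap[of _ "{..<m}"])
  also have "(\<Sum>i<m. \<Sum>y\<in>pm1. \<Sum>s\<in>cube m. P y s * ln (pr1 P m i y (s i) / prY P m y))
               = - (\<Sum>i<m. binary_entropy (agree_prob i))"
    by (simp add: expectation_ln_pr1_cond sum_negf)
  finally show ?thesis by simp
qed

lemma loss_le:
  assumes D: "D \<in> datasets m n" and n: "n > 0" and y: "y \<in> pm1" and s: "s \<in> cube m"
  shows "loss P m n D y s \<le> (\<Sum>i<m. neg_ln_clipped n (src_cond (acc_est n D i) (s i) y))
           - ln (prY P m y) + ln_freq_bound (prLam P s) n (sample_count n D (\<lambda>x. snd x = s))"
proof -
  have "loss P m n D y s = - ln (post_est P m n D y s)"
    using pm1_cases[OF y] by (auto simp: loss_def)
  also have "post_est P m n D y s = (\<Prod>i<m. src_cond (acc_est n D i) (s i) y) * prY P m y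
                                      / (real (sample_count n D (\<lambda>x. snd x = s)) / real n)"
    by (simp add: post_est_def emp_lam_def sample_count_def)
  also have "- ln \<dots> \<le> (\<Sum>i<m. neg_ln_clipped n (src_cond (acc_est n D i) (s i) y))
           - ln (prY P m y) + ln_freq_bound (prLam P s) n (sample_count n D (\<lambda>x. snd x = s))"
  proof (rule neg_ln_posterior_le[OF n _ _ prY_pos prY_le_1[OF y] prLam_pos])
    fix i assume "i \<in> {..<m}"
    then show "0 \<le> src_cond (acc_est n D i) (s i) y \<and> src_cond (acc_est n D i) (s i) y \<le> 1"
      using src_cond_acc_est[OF D n _ y cube_memD[OF s]] sample_count_le[of n D] n
      by (auto simp: field_simps)
  qed simp
  finally show ?thesis .
qed

lemma sum_P_neg_ln_clipped_src_cond:
  assumes D: "D \<in> datasets m n" and n: "n > 0" and i: "i < m"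
  shows "(\<Sum>y\<in>pm1. \<Sum>s\<in>cube m. P y s * neg_ln_clipped n (src_cond (acc_est n D i) (s i) y))
           = freq_cross_entropy n (agree_prob i) (sample_count n D (\<lambda>x. snd x i * fst x = 1))"
proof -
  define k where "k = sample_count n D (\<lambda>x. snd x i * fst x = 1)"
  have "(\<Sum>y\<in>pm1. \<Sum>s\<in>cube m. P y s * neg_ln_clipped n (src_cond (acc_est n D i) (s i) y))
      = (\<Sum>x\<in>pm1 \<times> cube m. P (fst x) (snd x) *
           (\<lambda>b. neg_ln_clipped n (if b then real k / real n else 1 - real k / real n)) (snd x i * fst x = 1))"
    unfolding sum.cartesian_product case_prod_beta k_def
    using src_cond_acc_est[OF D n i] cube_memD[OF _ i] by (intro sum.cong refl) (auto simp: mult.commute)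
  also have "\<dots> = freq_cross_entropy n (agree_prob i) k"
    by (subst sum_mult_pred_split[OF _ sum_P_pairs]) (simp_all add: agree_prob_def freq_cross_entropy_def)
  finally show ?thesis by (simp add: k_def)
qed

lemma sum_datasets_ln_freq_bound:
  assumes n: "n > 0" and s: "s \<in> cube m"
  shows "(\<Sum>D\<in>datasets m n. pr_data P n D * ln_freq_bound (prLam P s) n (sample_count n D (\<lambda>x. snd x = s)))
           = ln (prLam P s) + (1 - prLam P s) ^ n * (1 - ln (prLam P s))"
proof -
  have "{x\<in>pm1 \<times> cube m. snd x = s} = pm1 \<times> {s}"
    using s by auto
  then have q: "prLam P s = (\<Sum>x\<in>{x\<in>pm1 \<times> cube m. snd x = s}. P (fst x) (snd x))"
    by (simp add: prLam_def sum.cartesian_product')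
  show ?thesis
    unfolding sum_datasets_sample_count[OF sum_P_pairs q]
    by (rule binomial_expectation_ln_freq_bound[OF n prLam_pos])
qed

lemma sum_pr_data: "(\<Sum>D\<in>datasets m n. pr_data P n D) = 1"
  using sum_datasets_sample_count[OF sum_P_pairs refl, of n "\<lambda>_. 1" "\<lambda>_. True"]
  by (simp add: binomial_expectation_const)

lemma pr_data_nonneg: "pr_data P n D \<ge> 0"
  unfolding pr_data_def using P_pos by (intro prod_nonneg) (auto intro: less_imp_le)

lemma gen_err_le:
  assumes n: "n > 0"
  shows "gen_err P m n \<le> (\<Sum>i<m. binomial_expectation n (agree_prob i) (freq_cross_entropy n (agree_prob i)))
           + (\<Sum>y\<in>pm1. \<Sum>s\<in>cube m. P y s *
                (ln (prLam P s) - ln (prY P m y) + (1 - prLam P s) ^ n * (1 - ln (prLam P s))))"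
proof -
  define src where "src D y s = (\<Sum>i<m. neg_ln_clipped n (src_cond (acc_est n D i) (s i) y))" for D y s
  define cnt where "cnt D s = ln_freq_bound (prLam P s) n (sample_count n D (\<lambda>x. snd x = s))" for D s
  let ?E = "\<lambda>f. \<Sum>D\<in>datasets m n. pr_data P n D * f D"
  have "gen_err P m n \<le> ?E (\<lambda>D. \<Sum>y\<in>pm1. \<Sum>s\<in>cube m. P y s * (src D y s - ln (prY P m y) + cnt D s))"
    unfolding gen_err_def src_def cnt_def using loss_le[OF _ n] P_pos pr_data_nonneg
    by (intro sum_mono mult_left_mono) (auto intro: less_imp_le)
  also have "\<dots> = ?E (\<lambda>D. \<Sum>y\<in>pm1. \<Sum>s\<in>cube m. P y s * src D y s)
                  + (\<Sum>y\<in>pm1. \<Sum>s\<in>cube m. P y s * (?E (\<lambda>D. cnt D s) - ln (prY P m y) * ?E (\<lambda>_. 1)))"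
    by (simp add: algebra_simps sum.distrib sum_subtractf sum_distrib_left sum.swap[of _ "datasets m n"])
  also have "?E (\<lambda>D. \<Sum>y\<in>pm1. \<Sum>s\<in>cube m. P y s * src D y s)
               = ?E (\<lambda>D. \<Sum>i<m. freq_cross_entropy n (agree_prob i) (sample_count n D (\<lambda>x. snd x i * fst x = 1)))"
    unfolding src_def
    by (intro sum.cong refl arg_cong[where f = "(*) _"])
       (simp add: sum_distrib_left sum.swap[of _ "{..<m}"] sum_P_neg_ln_clipped_src_cond[OF _ n])
  also have "\<dots> = (\<Sum>i<m. binomial_expectation n (agree_prob i) (freq_cross_entropy n (agree_prob i)))"
    by (simp add: sum_distrib_left sum.swap[of _ "{..<m}"] sum_datasets_sample_count[OF sum_P_pairs]
          agree_prob_def)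
  also have "(\<Sum>y\<in>pm1. \<Sum>s\<in>cube m. P y s * (?E (\<lambda>D. cnt D s) - ln (prY P m y) * ?E (\<lambda>_. 1)))
               = (\<Sum>y\<in>pm1. \<Sum>s\<in>cube m. P y s *
                    (ln (prLam P s) - ln (prY P m y) + (1 - prLam P s) ^ n * (1 - ln (prLam P s))))"
    unfolding cnt_def by (intro sum.cong refl) (simp add: sum_datasets_ln_freq_bound[OF n] sum_pr_data)
  finally show ?thesis .
qed

lemma excess_err_le:
  assumes n: "n > 0"
  shows "excess_err P m n \<le> (\<Sum>e\<in>E. cmi P m (Min e) (Max e))
           + (\<Sum>i<m. binomial_expectation n (agree_prob i) (freq_cross_entropy n (agree_prob i))
                      - binary_entropy (agree_prob i))
           + (\<Sum>y\<in>pm1. \<Sum>s\<in>cube m. P y s * ((1 - prLam P s) ^ n * (1 - ln (prLam P s))))"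
proof -
  define T where "T s = (1 - prLam P s) ^ n * (1 - ln (prLam P s))" for s
  have "P y s * (ln (prLam P s) - ln (prY P m y) + T s) + P y s * ln (P y s / prLam P s)
          = P y s * ln (P y s / prY P m y) + P y s * T s" for y s
    using P_pos[of y s] prLam_pos[of s] prY_pos[of y] by (simp add: ln_div algebra_simps)
  then have "(\<Sum>y\<in>pm1. \<Sum>s\<in>cube m. P y s * (ln (prLam P s) - ln (prY P m y) + T s))
               - cond_ent P m
             = (\<Sum>y\<in>pm1. \<Sum>s\<in>cube m. P y s * ln (P y s / prY P m y))
               + (\<Sum>y\<in>pm1. \<Sum>s\<in>cube m. P y s * T s)"
    unfolding cond_ent_def diff_minus_eq_add sum.distrib[symmetric] by simp
  then show ?thesis
    using gen_err_le[OF n] unfolding excess_err_def sum_cmi_eq T_def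
    by (simp add: sum_subtractf)
qed

lemma sum_freq_cross_entropy_eventually_le:
  assumes c: "c > 0"
  shows "eventually (\<lambda>n. (\<Sum>i<m. binomial_expectation n (agree_prob i) (freq_cross_entropy n (agree_prob i))
                                - binary_entropy (agree_prob i))
                          \<le> real m / (2 * real n) + c / real n) sequentially"
proof -
  define \<epsilon> where "\<epsilon> = c / (real m + 1)"
  have \<epsilon>: "\<epsilon> > 0" "real m * \<epsilon> \<le> c"
    using c by (simp_all add: \<epsilon>_def field_simps)
  have "eventually (\<lambda>n. (\<Sum>i<m. binomial_expectation n (agree_prob i) (freq_cross_entropy n (agree_prob i))
                                - binary_entropy (agree_prob i))
                        \<le> (\<Sum>i<m. 1 / (2 * real n) + \<epsilon> / real n)) sequentially"
  proof (intro eventually_sum_le finite_lessThan)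
    fix i assume "i \<in> {..<m}"
    with binomial_expectation_freq_cross_entropy_eventually_le[OF agree_prob_bounds \<epsilon>(1), of i]
    show "eventually (\<lambda>n. binomial_expectation n (agree_prob i) (freq_cross_entropy n (agree_prob i))
                             - binary_entropy (agree_prob i) \<le> 1 / (2 * real n) + \<epsilon> / real n) sequentially"
      by (auto elim!: eventually_mono)
  qed
  then show ?thesis
  proof eventually_elim
    case (elim n)
    have "real m * \<epsilon> / real n \<le> c / real n"
      using \<epsilon>(2) by (intro divide_right_mono) auto
    then show ?case
      using elim by (simp add: distrib_left)
  qed
qed

lemma sum_tail_eventually_le:
  assumes c: "c > 0"
  shows "eventually (\<lambda>n. (\<Sum>y\<in>pm1. \<Sum>s\<in>cube m. P y s * ((1 - prLam P s) ^ n * (1 - ln (prLam P s))))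
                          \<le> c / real n) sequentially"
proof -
  define N where "N = card pm1 * card (cube m)"
  have "N > 0"
    using cube_ne_empty by (simp add: N_def card_gt_0_iff pm1_def)
  then have \<epsilon>: "c / N > 0"
    using c by simp
  have "eventually (\<lambda>n. (\<Sum>y\<in>pm1. \<Sum>s\<in>cube m. P y s * ((1 - prLam P s) ^ n * (1 - ln (prLam P s))))
                        \<le> (\<Sum>y\<in>pm1. \<Sum>s\<in>cube m. (c / N) / real n)) sequentially"
  proof (intro eventually_sum_le finite_pm1 finite_cube)
    fix y s assume "s \<in> cube m"
    from eventually_power_mult_le_div[OF prLam_pos prLam_le_1[OF this] \<epsilon>,
        of "P y s * (1 - ln (prLam P s))"]
    show "eventually (\<lambda>n. P y s * ((1 - prLam P s) ^ n * (1 - ln (prLam P s))) \<le> (c / N) / real n)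
            sequentially"
      by (simp add: mult.left_commute)
  qed
  moreover have "(\<Sum>y\<in>pm1. \<Sum>s\<in>cube m. (c / N) / real n) = c / real n" for n
    using cube_ne_empty by (simp add: N_def pm1_def)
  ultimately show ?thesis
    by simp
qed

lemma excess_err_eventually_le:
  assumes c: "c > 0"
  shows "eventually (\<lambda>n. excess_err P m n
           \<le> real m / (2 * real n) + (\<Sum>e\<in>E. cmi P m (Min e) (Max e)) + c / real n) sequentially"
proof -
  have "c / 2 > 0" using c by simp
  from sum_freq_cross_entropy_eventually_le[OF this] sum_tail_eventually_le[OF this]
    eventually_gt_at_top[of 0]
  show ?thesis
  proof eventually_elim
  case (elim n)
  then show ?case
  proof -
    have "c / 2 / real n + c / 2 / real n = c / real n"
      by (simp add: add_divide_distrib[symmetric])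
    then show ?case
      using elim excess_err_le[OF elim(3)] by linarith
  qed
  qed
qed

end

theorem theorem2:
  fixes m :: nat and thY :: real and th :: "nat \<Rightarrow> real"
    and E :: "nat set set" and thE :: "nat set \<Rightarrow> real"
  assumes pairs: "\<forall>e\<in>E. e \<subseteq> {..<m} \<and> card e = 2"
    and disjoint: "\<forall>e\<in>E. \<forall>e'\<in>E. e \<noteq> e' \<longrightarrow> e \<inter> e' = {}"
    and nonneg_Y: "thY \<ge> 0"
    and nonneg_src: "\<forall>i<m. th i \<ge> 0"
    and nonneg_pair: "\<forall>e\<in>E. thE e \<ge> 0"
  shows "\<exists>r :: nat \<Rightarrow> real. r \<in> o(\<lambda>n. 1 / real n) \<and>
           (\<forall>n>0. excess_err (ising m thY th E thE) m n
                 \<le> real m / (2 * real n)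
                   + (\<Sum>e\<in>E. cmi (ising m thY th E thE) m (Min e) (Max e))
                   + r n)"
proof -
  interpret ising_matching m thY th E thE
    using pairs disjoint by unfold_locales
  define B where "B = (\<Sum>e\<in>E. cmi P m (Min e) (Max e))"
  define r where "r n = max 0 (excess_err P m n - real m / (2 * real n) - B)" for n
  have "eventually (\<lambda>n. excess_err P m n - real m / (2 * real n) - B \<le> c / real n) sequentially"
    if "c > 0" for c
    using excess_err_eventually_le[OF that] by eventually_elim (simp add: B_def)
  then have "r \<in> o(\<lambda>n. 1 / real n)"
    unfolding r_def by (rule max_0_in_smallo_inverse)
  moreover have "excess_err P m n \<le> real m / (2 * real n) + B + r n" for n
    by (simp add: r_def)
  ultimately show ?thesis
    unfolding B_def by blast
qed

end
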